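(* For every integer $n\ge 0$, \[ (p_{2,5}+p_{3,5})(n)=p(n)+\sum_{k=1}^\infty (-1)^k \big(p(n-P_{7,k}) +p(n-Q_{7,k})\big),\] where $P_{7,k}=\frac{k(5k-3)}{2}$ and $Q_{7,k}=\frac{k(5k+3)}{2}$.
   Context: $p(n)$ is the number of integer partitions of $n$, with $p(0)=1$ and $p(x)=0$ for $x<0$. $(p_{2,5}+p_{3,5})(n)$ denotes the number of partitions of $n$ in which every part is congruent to $2$ or to $3$ modulo $5$ (equal to $1$ for $n=0$, and $0$ for $n\notin\mathbb{N}_0$). *)

theory Defs
  imports Complex_Main "HOL-Library.Multiset"
begin

definition partitions_with :: "(nat \<Rightarrow> bool) \<Rightarrow> nat \<Rightarrow> nat multiset set" where
  "partitions_with A n = {M. (\<forall>x\<in>#M. 0 < x \<and> A x) \<and> sum_mset M = n}"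

definition part :: "int \<Rightarrow> int" where
  "part x = (if x < 0 then 0 else int (card (partitions_with (\<lambda>_. True) (nat x))))"

definition p25_35 :: "int \<Rightarrow> int" where
  "p25_35 x = (if x < 0 then 0 else
     int (card (partitions_with (\<lambda>m. m mod 5 = 2 \<or> m mod 5 = 3) (nat x))))"

definition P7 :: "nat \<Rightarrow> int" where
  "P7 k = (int k * (5 * int k - 3)) div 2"

definition Q7 :: "nat \<Rightarrow> int" where
  "Q7 k = (int k * (5 * int k + 3)) div 2"

end

theory Submission
  imports Defs "HOL-Computational_Algebra.Formal_Power_Series"
begin

(* Parts not congruent to 2 or 3 modulo 5 are those congruent to 0, 1 or 4, so the generating
   function of p_{2,5} + p_{3,5} is P(q) = sum_n p(n) q^n times
   prod_{i>=0} (1 - q^(5i+5)) (1 - q^(5i+1)) (1 - q^(5i+4)). By Jacobi's triple product identity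
   the latter is 1 + sum_{k>=1} (-1)^k (q^P_{7,k} + q^Q_{7,k}).

   Only the coefficient of q^N matters, so everything stays finite: partitions of N use parts at
   most 5(N+1), and the product over i < n of (1 - q^(m(i+1))) (1 - q^(mi+a)) (1 - q^(mi+b)),
   m = a + b, agrees with the triple product series up to degree n. This follows from the finite
   q-binomial theorem for prod_{j<2n} (q^(mn-b) - q^(mj)), since the Gaussian binomial [2n, j]
   in q^m times (q^m;q^m)_n is 1 modulo q^(m(min(j, 2n-j)+1)). *)

unbundle fps_syntax

lemma choose_two_Suc: "Suc j choose 2 = (j choose 2) + j"
  by (simp add: numeral_2_eq_2)

lemma sum_lessThan_eq_choose_two: "(\<Sum>i<n. i) = n choose 2"
  by (induction n) (simp_all add: choose_two_Suc numeral_2_eq_2)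

lemma of_nat_choose_two: "of_nat (k choose 2) = (of_nat k * (of_nat k - 1) / 2 :: 'a::field_char_0)"
proof -
  have "2 * (k choose 2) = k * (k - 1)"
    by (induction k) (simp_all add: choose_two_Suc numeral_2_eq_2 algebra_simps)
  then have "2 * of_nat (k choose 2) = (of_nat (k * (k - 1)) :: 'a)"
    by (metis of_nat_mult of_nat_numeral)
  then show ?thesis
    by (cases k) (simp_all add: field_simps)
qed

lemma (in comm_monoid_set) lessThan_add:
  "F g {..<n + k :: nat} = F g {..<n} \<^bold>* F (\<lambda>i. g (n + i)) {..<k}"
  by (induction k) (simp_all add: lessThan_Suc ac_simps)

lemma fps_neg_one_power_mult_nth: "((-1) ^ k * f :: 'a::comm_ring_1 fps) $ i = (-1) ^ k * f $ i"
  by (induction k) auto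

lemma fps_mult_nth_cong: "(\<And>i. i \<le> n \<Longrightarrow> f $ i = g $ i) \<Longrightarrow> (h * f) $ n = (h * g) $ n"
  by (auto simp: fps_mult_nth intro!: sum.cong)

lemma fps_mult_signed_sum_nth:
  fixes f :: "'a::comm_ring_1 fps"
  shows "(f * (1 + (\<Sum>k\<in>A. (-1) ^ k * (fps_X ^ u k + fps_X ^ v k)))) $ N
    = f $ N + (\<Sum>k\<in>A. (-1) ^ k * ((f * fps_X ^ u k) $ N + (f * fps_X ^ v k) $ N))"
  by (simp only: distrib_left mult_1_right sum_distrib_left mult.left_commute[of f]
      fps_add_nth fps_sum_nth fps_neg_one_power_mult_nth)

section \<open>Gaussian binomial coefficients\<close>

fun qbinomial :: "'a::comm_ring_1 \<Rightarrow> nat \<Rightarrow> nat \<Rightarrow> 'a" where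
  "qbinomial q 0 j = (if j = 0 then 1 else 0)"
| "qbinomial q (Suc m) 0 = 1"
| "qbinomial q (Suc m) (Suc j) = qbinomial q m j + q ^ Suc j * qbinomial q m (Suc j)"

definition qpochhammer :: "'a::comm_ring_1 \<Rightarrow> nat \<Rightarrow> 'a" where
  "qpochhammer q m = (\<Prod>i<m. 1 - q ^ Suc i)"

lemma qpochhammer_0 [simp]: "qpochhammer q 0 = 1"
  by (simp add: qpochhammer_def)

lemma qpochhammer_Suc: "qpochhammer q (Suc m) = qpochhammer q m * (1 - q ^ Suc m)"
  by (simp add: qpochhammer_def)

lemma qbinomial_0_right [simp]: "qbinomial q m 0 = 1"
  by (cases m) auto

lemma qbinomial_eq_0: "m < j \<Longrightarrow> qbinomial q m j = 0"
proof (induction m arbitrary: j)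
  case (Suc m)
  then show ?case by (cases j) auto
qed simp

lemma qbinomial_Suc:
  "qbinomial q (Suc m) j = (if j = 0 then 0 else qbinomial q m (j - 1)) + q ^ j * qbinomial q m j"
  by (cases j) auto

lemma qbinomial_mult_qpochhammer:
  "j \<le> m \<Longrightarrow> qbinomial q m j * qpochhammer q j * qpochhammer q (m - j) = qpochhammer q m"
proof (induction m arbitrary: j)
  case (Suc m)
  show ?case
  proof (cases j)
    case (Suc i)
    have IH_i: "qbinomial q m i * qpochhammer q i * qpochhammer q (m - i) = qpochhammer q m"
      using Suc.IH Suc.prems \<open>j = Suc i\<close> by simp
    show ?thesis
    proof (cases "i = m")
      case True
      then show ?thesis
        using IH_i \<open>j = Suc i\<close> by (simp add: qpochhammer_Suc qbinomial_eq_0 flip: mult.assoc)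
    next
      case False
      then have "Suc i \<le> m" using Suc.prems \<open>j = Suc i\<close> by simp
      then have IH_Suc_i:
          "qbinomial q m (Suc i) * qpochhammer q (Suc i) * qpochhammer q (m - Suc i) = qpochhammer q m"
        using Suc.IH by blast
      have m_i: "m - i = Suc (m - Suc i)"
        using \<open>Suc i \<le> m\<close> by simp
      have q_pow: "q ^ Suc i * q ^ (m - i) = q ^ Suc m"
        by (simp only: power_add[symmetric]) (use \<open>Suc i \<le> m\<close> in simp)
      have "qbinomial q (Suc m) j * qpochhammer q j * qpochhammer q (Suc m - j)
          = (qbinomial q m i * qpochhammer q i * qpochhammer q (m - i)) * (1 - q ^ Suc i)
            + q ^ Suc i * (qbinomial q m (Suc i) * qpochhammer q (Suc i) * qpochhammer q (m - Suc i))
              * (1 - q ^ (m - i))"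
        unfolding \<open>j = Suc i\<close> by (simp add: qpochhammer_Suc m_i algebra_simps)
      also have "\<dots> = qpochhammer q m * (1 - q ^ Suc i * q ^ (m - i))"
        unfolding IH_i IH_Suc_i by (simp add: algebra_simps)
      finally show ?thesis
        unfolding q_pow by (simp add: qpochhammer_Suc)
    qed
  qed simp
qed simp

theorem q_binomial_theorem:
  "(\<Prod>i<m. x + y * q ^ i) = (\<Sum>j\<le>m. qbinomial q m j * q ^ (j choose 2) * y ^ j * x ^ (m - j))"
proof (induction m arbitrary: y)
  case (Suc m)
  have "(\<Prod>i<Suc m. x + y * q ^ i) = (x + y) * (\<Prod>i<m. x + (q * y) * q ^ i)"
    by (subst prod.lessThan_Suc_shift) (simp add: algebra_simps)
  also have "\<dots> = (x + y) * (\<Sum>j\<le>m. qbinomial q m j * q ^ (j choose 2) * (q * y) ^ j * x ^ (m - j))"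
    using Suc.IH by simp
  also have "\<dots> = (\<Sum>j\<le>m. qbinomial q m j * q ^ (Suc j choose 2) * y ^ Suc j * x ^ (m - j))
       + (\<Sum>j\<le>m. q ^ j * qbinomial q m j * q ^ (j choose 2) * y ^ j * x ^ (Suc m - j))"
    by (simp add: choose_two_Suc sum_distrib_left algebra_simps power_mult_distrib power_add
        Suc_diff_le sum.distrib)
  also have "(\<Sum>j\<le>m. qbinomial q m j * q ^ (Suc j choose 2) * y ^ Suc j * x ^ (m - j))
      = (\<Sum>j\<le>Suc m. (if j = 0 then 0 else qbinomial q m (j - 1)) * q ^ (j choose 2) * y ^ j
                        * x ^ (Suc m - j))"
    by (subst sum.atMost_Suc_shift) simp
  also have "(\<Sum>j\<le>m. q ^ j * qbinomial q m j * q ^ (j choose 2) * y ^ j * x ^ (Suc m - j))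
      = (\<Sum>j\<le>Suc m. q ^ j * qbinomial q m j * q ^ (j choose 2) * y ^ j * x ^ (Suc m - j))"
    by (simp add: qbinomial_eq_0)
  finally show ?case
    by (simp add: qbinomial_Suc sum.distrib[symmetric] algebra_simps)
qed (simp add: numeral_2_eq_2)

lemma power_dvd_qpochhammer_diff: "L \<le> m \<Longrightarrow> q ^ Suc L dvd qpochhammer q m - qpochhammer q L"
proof (induction m rule: dec_induct)
  case (step k)
  have "q ^ Suc L dvd q ^ Suc k"
    using step.hyps by (intro le_imp_power_dvd) simp
  then have "q ^ Suc L dvd (qpochhammer q k - qpochhammer q L) - qpochhammer q k * q ^ Suc k"
    using step.IH by (intro dvd_diff[of _ _ "qpochhammer q k * q ^ Suc k"] dvd_mult)
  then show ?case
    by (simp add: qpochhammer_Suc algebra_simps)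
qed simp

(* All (q;q)_i with i >= L agree modulo q^(L+1), and the Gaussian binomial is
   (q;q)_(j+k) / ((q;q)_j (q;q)_k). *)
lemma power_dvd_qbinomial_mult_qpochhammer_diff:
  assumes "L \<le> j" "L \<le> k" "L \<le> n" and unit: "is_unit (qpochhammer q L)"
  shows "q ^ Suc L dvd qbinomial q (j + k) j * qpochhammer q n - 1"
proof -
  define c where "c = qbinomial q (j + k) j * qpochhammer q n"
  let ?P = "qpochhammer q" and ?D = "q ^ Suc L"
  have "c * ?P j * ?P k = (qbinomial q (j + k) j * ?P j * ?P (j + k - j)) * ?P n"
    by (simp add: c_def mult_ac)
  also have "\<dots> = ?P (j + k) * ?P n"
    using qbinomial_mult_qpochhammer[of j "j + k" q] by simp
  finally have "c * ?P j * ?P k = ?P (j + k) * ?P n" .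
  then have "(c - 1) * (?P L * ?P L)
      = (?P (j + k) * (?P n - ?P L) + ?P L * (?P (j + k) - ?P L))
        - c * (?P L * (?P k - ?P L) + ?P k * (?P j - ?P L))"
    by (simp add: algebra_simps)
  moreover have "?D dvd ?P i - ?P L" if "L \<le> i" for i
    using power_dvd_qpochhammer_diff[OF that] .
  ultimately have "?D dvd (c - 1) * (?P L * ?P L)"
    using assms(1-3) by (simp add: dvd_diff dvd_add dvd_mult)
  then show ?thesis
    using unit by (simp add: c_def dvd_mult_unit_iff is_unit_mult_iff)
qed

section \<open>Partial Jacobi triple products\<close>

definition jacobi_exp :: "nat \<Rightarrow> nat \<Rightarrow> nat \<Rightarrow> nat" where
  "jacobi_exp m c k = m * (k choose 2) + c * k"

(* the exponent (a+b) t(t-1)/2 + b t of the triple product series at the signed index t = j - n *)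
definition centered_jacobi_exp :: "nat \<Rightarrow> nat \<Rightarrow> nat \<Rightarrow> nat \<Rightarrow> nat" where
  "centered_jacobi_exp a b n j =
     (if n \<le> j then jacobi_exp (a + b) b (j - n) else jacobi_exp (a + b) a (n - j))"

definition triple_product_partial :: "nat \<Rightarrow> nat \<Rightarrow> nat \<Rightarrow> 'a::comm_ring_1 fps" where
  "triple_product_partial a b n = (\<Prod>i<n. (1 - fps_X ^ ((a + b) * Suc i))
     * (1 - fps_X ^ ((a + b) * i + a)) * (1 - fps_X ^ ((a + b) * i + b)))"

lemma centered_jacobi_exp_eq:
  assumes "0 < n" "j \<le> 2 * n"
  shows "(a + b) * (j choose 2) + ((a + b) * n - b) * (2 * n - j)
       = (a + b) * (n choose 2) + ((a + b) * n - b) * n + centered_jacobi_exp a b n j"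
    (is "?l = ?r")
proof -
  have b_le: "b \<le> (a + b) * n"
    using assms(1) by (cases n) auto
  have "real ?l = real ?r"
  proof (cases "n \<le> j")
    case True
    then obtain k where "j = n + k" "k \<le> n"
      using assms(2) le_Suc_ex by fastforce
    then show ?thesis
      using b_le by (simp add: centered_jacobi_exp_def jacobi_exp_def of_nat_diff of_nat_choose_two)
        (simp add: field_simps)
  next
    case False
    then obtain k where "n = j + k" "0 < k"
      using le_Suc_ex by (metis add_0_right nat_le_linear zero_less_iff_neq_zero)
    then show ?thesis
      using b_le by (simp add: centered_jacobi_exp_def jacobi_exp_def of_nat_diff of_nat_choose_two)
        (simp add: field_simps)
  qed
  then show ?thesis
    by (simp only: of_nat_eq_iff)
qed

lemma le_jacobi_exp: "0 < c \<Longrightarrow> k \<le> jacobi_exp m c k"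
  by (cases c) (simp_all add: jacobi_exp_def trans_le_add2)

lemma prod_jacobi_factors_lower:
  "(\<Prod>j<n. fps_X ^ ((a + b) * n - b) - fps_X ^ ((a + b) * j) :: 'a::comm_ring_1 fps)
    = (-1) ^ n * fps_X ^ ((a + b) * (n choose 2)) * (\<Prod>i<n. 1 - fps_X ^ ((a + b) * i + a))"
proof -
  let ?X = "fps_X :: 'a fps" and ?m = "a + b"
  have "(\<Prod>j<n. ?X ^ (?m * n - b) - ?X ^ (?m * j))
      = (\<Prod>j<n. (- (?X ^ (?m * j))) * (1 - ?X ^ (?m * (n - Suc j) + a)))"
  proof (rule prod.cong)
    fix j assume "j \<in> {..<n}"
    then obtain r where "n = Suc (j + r)"
      using less_iff_Suc_add by auto
    then have "?m * n - b = ?m * j + (?m * (n - Suc j) + a)"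
      by (simp add: algebra_simps)
    then show "?X ^ (?m * n - b) - ?X ^ (?m * j) = (- (?X ^ (?m * j))) * (1 - ?X ^ (?m * (n - Suc j) + a))"
      by (simp add: algebra_simps power_add)
  qed simp
  also have "\<dots> = (\<Prod>j<n. - (?X ^ (?m * j))) * (\<Prod>j<n. 1 - ?X ^ (?m * (n - Suc j) + a))"
    by (rule prod.distrib)
  also have "(\<Prod>j<n. - (?X ^ (?m * j))) = (-1) ^ n * ?X ^ (?m * (n choose 2))"
    by (simp add: prod_uminus sum_lessThan_eq_choose_two flip: power_sum sum_distrib_left)
  also have "(\<Prod>j<n. 1 - ?X ^ (?m * (n - Suc j) + a)) = (\<Prod>i<n. 1 - ?X ^ (?m * i + a))"
    by (rule prod.nat_diff_reindex)
  finally show ?thesis .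
qed

lemma prod_jacobi_factors_upper:
  assumes "0 < n"
  shows "(\<Prod>i<n. fps_X ^ ((a + b) * n - b) - fps_X ^ ((a + b) * (n + i)) :: 'a::comm_ring_1 fps)
    = fps_X ^ (((a + b) * n - b) * n) * (\<Prod>i<n. 1 - fps_X ^ ((a + b) * i + b))"
proof -
  let ?X = "fps_X :: 'a fps" and ?m = "a + b"
  have "b \<le> ?m * n"
    using assms by (cases n) auto
  then have "?X ^ (?m * n - b) - ?X ^ (?m * (n + i)) = ?X ^ (?m * n - b) * (1 - ?X ^ (?m * i + b))" for i
    by (simp add: algebra_simps add_mult_distrib2 flip: power_add)
  then show ?thesis
    by (simp add: prod.distrib power_mult)
qed

lemma prod_shifted_jacobi_factors:
  assumes "0 < n"
  shows "(\<Prod>j<2 * n. fps_X ^ ((a + b) * n - b) - fps_X ^ ((a + b) * j) :: 'a::comm_ring_1 fps)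
    = (-1) ^ n * fps_X ^ ((a + b) * (n choose 2) + ((a + b) * n - b) * n)
      * (\<Prod>i<n. (1 - fps_X ^ ((a + b) * i + a)) * (1 - fps_X ^ ((a + b) * i + b)))"
  unfolding mult_2 prod.lessThan_add prod_jacobi_factors_lower prod_jacobi_factors_upper[OF assms]
    power_add prod.distrib by (simp only: mult_ac)

lemma prod_jacobi_factors_eq_sum:
  assumes "0 < n"
  shows "(\<Prod>i<n. (1 - fps_X ^ ((a + b) * i + a)) * (1 - fps_X ^ ((a + b) * i + b)) :: 'a::idom fps)
    = (\<Sum>j\<le>2 * n. (-1) ^ (j + n) * qbinomial (fps_X ^ (a + b)) (2 * n) j
                       * fps_X ^ centered_jacobi_exp a b n j)"
    (is "?T = _")
proof -
  let ?X = "fps_X :: 'a fps" and ?m = "a + b" and ?c = "(a + b) * n - b"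
  define s where "s = ?m * (n choose 2) + ?c * n"
  have "(\<Prod>j<2 * n. ?X ^ ?c - ?X ^ (?m * j)) = (\<Prod>j<2 * n. ?X ^ ?c + (-1) * (?X ^ ?m) ^ j)"
    by (simp add: power_mult)
  also have "\<dots> = (\<Sum>j\<le>2 * n. qbinomial (?X ^ ?m) (2 * n) j * (?X ^ ?m) ^ (j choose 2) * (-1) ^ j
                        * (?X ^ ?c) ^ (2 * n - j))"
    by (rule q_binomial_theorem)
  also have "\<dots> = ?X ^ s * (\<Sum>j\<le>2 * n. (-1) ^ j * qbinomial (?X ^ ?m) (2 * n) j
                                    * ?X ^ centered_jacobi_exp a b n j)"
    unfolding sum_distrib_left
  proof (rule sum.cong)
    fix j assume "j \<in> {..2 * n}"
    then have "?m * (j choose 2) + ?c * (2 * n - j) = s + centered_jacobi_exp a b n j"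
      using centered_jacobi_exp_eq[OF assms] by (simp add: s_def)
    then have h: "(?X ^ ?m) ^ (j choose 2) * (?X ^ ?c) ^ (2 * n - j)
        = ?X ^ s * ?X ^ centered_jacobi_exp a b n j"
      by (simp flip: power_mult power_add)
    have "qbinomial (?X ^ ?m) (2 * n) j * (?X ^ ?m) ^ (j choose 2) * (-1) ^ j * (?X ^ ?c) ^ (2 * n - j)
        = (-1) ^ j * qbinomial (?X ^ ?m) (2 * n) j * ((?X ^ ?m) ^ (j choose 2) * (?X ^ ?c) ^ (2 * n - j))"
      by (simp only: mult_ac)
    then show "qbinomial (?X ^ ?m) (2 * n) j * (?X ^ ?m) ^ (j choose 2) * (-1) ^ j * (?X ^ ?c) ^ (2 * n - j)
        = ?X ^ s * ((-1) ^ j * qbinomial (?X ^ ?m) (2 * n) j * ?X ^ centered_jacobi_exp a b n j)"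
      unfolding h by (simp only: mult_ac)
  qed simp
  finally have sum_eq: "(-1) ^ n * ?T = (\<Sum>j\<le>2 * n. (-1) ^ j * qbinomial (?X ^ ?m) (2 * n) j
                                    * ?X ^ centered_jacobi_exp a b n j)"
    unfolding prod_shifted_jacobi_factors[OF assms] s_def by (simp add: mult.assoc)
  have "?T = (-1) ^ n * ((-1) ^ n * ?T)"
    by (simp flip: mult.assoc)
  then show ?thesis
    unfolding sum_eq by (simp add: sum_distrib_left power_add mult_ac)
qed

lemma sum_centered_jacobi_exp:
  fixes g :: "nat \<Rightarrow> 'a::comm_ring_1"
  shows "(\<Sum>j\<le>2 * n. (-1) ^ (j + n) * g (centered_jacobi_exp a b n j))
    = g 0 + (\<Sum>k=1..n. (-1) ^ k * (g (jacobi_exp (a + b) a k) + g (jacobi_exp (a + b) b k)))"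
proof -
  define f where "f j = (-1) ^ (j + n) * g (centered_jacobi_exp a b n j)" for j
  have "(\<Sum>j\<le>2 * n. f j) = (\<Sum>j<n. f j) + (\<Sum>i<Suc n. f (n + i))"
    using sum.lessThan_add[of f n "Suc n"] by (simp add: lessThan_Suc_atMost[symmetric] mult_2)
  also have "(\<Sum>j<n. f j) = (\<Sum>k<n. f (n - Suc k))"
    by (rule sum.nat_diff_reindex[symmetric])
  also have "\<dots> = (\<Sum>k<n. (-1) ^ Suc k * g (jacobi_exp (a + b) a (Suc k)))"
  proof (rule sum.cong)
    fix k assume "k \<in> {..<n}"
    then obtain r where "n = Suc k + r"
      using less_iff_Suc_add by auto
    then show "f (n - Suc k) = (-1) ^ Suc k * g (jacobi_exp (a + b) a (Suc k))"
      by (simp add: f_def centered_jacobi_exp_def minus_one_power_iff)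
  qed simp
  also have "(\<Sum>i<Suc n. f (n + i)) = f n + (\<Sum>k<n. f (n + Suc k))"
    by (subst sum.lessThan_Suc_shift) simp
  also have "f n = g 0"
    by (simp add: f_def centered_jacobi_exp_def jacobi_exp_def minus_one_power_iff binomial_eq_0)
  also have "(\<Sum>k<n. f (n + Suc k)) = (\<Sum>k<n. (-1) ^ Suc k * g (jacobi_exp (a + b) b (Suc k)))"
  proof (rule sum.cong)
    fix k
    have "n + Suc k + n = Suc k + 2 * n"
      by simp
    then show "f (n + Suc k) = (-1) ^ Suc k * g (jacobi_exp (a + b) b (Suc k))"
      unfolding f_def centered_jacobi_exp_def by (simp only: power_add power_mult) simp
  qed simp
  finally show ?thesis
    unfolding f_def by (simp add: sum.atLeast1_atMost_eq algebra_simps sum.distrib)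
qed

lemma triple_product_partial_eq:
  "triple_product_partial a b n = qpochhammer (fps_X ^ (a + b)) n
     * (\<Prod>i<n. (1 - fps_X ^ ((a + b) * i + a)) * (1 - fps_X ^ ((a + b) * i + b)))"
  by (simp add: triple_product_partial_def qpochhammer_def prod.distrib mult_ac flip: power_mult power_add)

lemma qpochhammer_fps_X_power_nth_0: "0 < m \<Longrightarrow> qpochhammer (fps_X ^ m) n $ 0 = 1"
  by (induction n) (simp_all add: qpochhammer_Suc)

lemma qbinomial_mult_qpochhammer_nth:
  assumes "0 < m" "L \<le> j" "L \<le> k" "L \<le> n" "i < m * Suc L"
  shows "(qbinomial (fps_X ^ m) (j + k) j * qpochhammer (fps_X ^ m) n :: 'a::field fps) $ i
    = (if i = 0 then 1 else 0)"
proof -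
  let ?q = "fps_X ^ m :: 'a fps"
  have "is_unit (qpochhammer ?q L)"
    using assms(1) by (simp add: qpochhammer_fps_X_power_nth_0)
  then have "?q ^ Suc L dvd qbinomial ?q (j + k) j * qpochhammer ?q n - 1"
    by (rule power_dvd_qbinomial_mult_qpochhammer_diff[OF assms(2-4)])
  then obtain h where "qbinomial ?q (j + k) j * qpochhammer ?q n - 1 = fps_X ^ (m * Suc L) * h"
    unfolding power_mult by (rule dvdE)
  then have "(qbinomial ?q (j + k) j * qpochhammer ?q n - 1) $ i = 0"
    using assms(5) by (simp add: fps_X_power_mult_nth)
  then show ?thesis
    by simp
qed

lemma qbinomial_mult_qpochhammer_mult_X_power_nth:
  assumes "0 < a" "0 < b" "i \<le> n" "j \<le> 2 * n"
  shows "(qbinomial (fps_X ^ (a + b)) (2 * n) j * qpochhammer (fps_X ^ (a + b)) n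
            * fps_X ^ centered_jacobi_exp a b n j :: 'a::field fps) $ i
    = (fps_X ^ centered_jacobi_exp a b n j :: 'a fps) $ i"
proof -
  let ?e = "centered_jacobi_exp a b n j"
  define L where "L = min j (2 * n - j)"
  have "n - L \<le> ?e"
    using assms le_jacobi_exp by (auto simp: L_def centered_jacobi_exp_def)
  moreover have "L < (a + b) * Suc L"
    using assms(1) by (cases a) auto
  ultimately have "i - ?e < (a + b) * Suc L"
    using assms(3) by linarith
  then have "(qbinomial (fps_X ^ (a + b)) (j + (2 * n - j)) j * qpochhammer (fps_X ^ (a + b)) n
      :: 'a fps) $ (i - ?e) = (if i - ?e = 0 then 1 else 0)"
    using assms by (intro qbinomial_mult_qpochhammer_nth) (auto simp: L_def)
  then show ?thesis
    using assms(4) by (auto simp: fps_X_power_mult_right_nth)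
qed

lemma triple_product_partial_nth:
  assumes "0 < a" "0 < b" "i \<le> n"
  shows "(triple_product_partial a b n :: 'a::field fps) $ i
    = (1 + (\<Sum>k=1..n. (-1) ^ k * (fps_X ^ jacobi_exp (a + b) a k + fps_X ^ jacobi_exp (a + b) b k))) $ i"
proof (cases "n = 0")
  case True
  then show ?thesis
    using assms by (simp add: triple_product_partial_def)
next
  case False
  then have "0 < n"
    by simp
  let ?q = "fps_X ^ (a + b) :: 'a fps"
  have "triple_product_partial a b n $ i
      = (\<Sum>j\<le>2 * n. (-1) ^ (j + n) * (qbinomial ?q (2 * n) j * qpochhammer ?q n
                                         * fps_X ^ centered_jacobi_exp a b n j)) $ i"
    unfolding triple_product_partial_eq prod_jacobi_factors_eq_sum[OF \<open>0 < n\<close>]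
      sum_distrib_left by (simp add: mult_ac)
  also have "\<dots> = (\<Sum>j\<le>2 * n. (-1) ^ (j + n) * (fps_X ^ centered_jacobi_exp a b n j :: 'a fps)) $ i"
    unfolding fps_sum_nth fps_neg_one_power_mult_nth
    using assms by (intro sum.cong refl) (simp add: qbinomial_mult_qpochhammer_mult_X_power_nth)
  also have "\<dots> = (1 + (\<Sum>k=1..n. (-1) ^ k
                      * (fps_X ^ jacobi_exp (a + b) a k + fps_X ^ jacobi_exp (a + b) b k))) $ i"
    by (subst sum_centered_jacobi_exp) simp
  finally show ?thesis .
qed

section \<open>Partition generating functions\<close>

definition partitions_into :: "nat set \<Rightarrow> nat \<Rightarrow> nat multiset set" where
  "partitions_into S n = {M. set_mset M \<subseteq> S \<and> sum_mset M = n}"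

definition partition_gf :: "nat set \<Rightarrow> 'a::comm_ring_1 fps" where
  "partition_gf S = Abs_fps (\<lambda>n. of_nat (card (partitions_into S n)))"

lemma member_le_sum_mset: "x \<in># M \<Longrightarrow> x \<le> sum_mset (M :: nat multiset)"
  using sum_mset.remove[of x M] by simp

lemma size_le_sum_mset: "0 \<notin># M \<Longrightarrow> size M \<le> sum_mset (M :: nat multiset)"
  by (induction M) auto

lemma finite_partitions_into:
  assumes "finite S" "0 \<notin> S"
  shows "finite (partitions_into S n)"
proof (rule finite_subset)
  show "partitions_into S n \<subseteq> (\<Union>k\<le>n. multisets_of_size S k)"
    using assms(2) size_le_sum_mset
    by (auto simp: partitions_into_def multisets_of_size_def)
  show "finite (\<Union>k\<le>n. multisets_of_size S k)"
    using assms(1) by auto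
qed

lemma partitions_into_insert_containing:
  assumes "m \<le> n"
  shows "{M \<in> partitions_into (insert m S) n. m \<in># M} = add_mset m ` partitions_into (insert m S) (n - m)"
proof (intro equalityI subsetI)
  fix M assume "M \<in> {M \<in> partitions_into (insert m S) n. m \<in># M}"
  then have M: "set_mset M \<subseteq> insert m S" "sum_mset M = n" "m \<in># M"
    by (auto simp: partitions_into_def)
  then have "M - {#m#} \<in> partitions_into (insert m S) (n - m)"
    using sum_mset.remove[OF M(3)] by (auto simp: partitions_into_def dest: in_diffD)
  moreover have "M = add_mset m (M - {#m#})"
    using M(3) by simp
  ultimately show "M \<in> add_mset m ` partitions_into (insert m S) (n - m)"
    by blast
next
  fix M assume "M \<in> add_mset m ` partitions_into (insert m S) (n - m)"
  then show "M \<in> {M \<in> partitions_into (insert m S) n. m \<in># M}"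
    using assms by (auto simp: partitions_into_def)
qed

lemma card_partitions_into_insert:
  assumes "finite S" "0 \<notin> S" "m \<notin> S" "0 < m"
  shows "card (partitions_into (insert m S) n)
    = card (partitions_into S n) + (if m \<le> n then card (partitions_into (insert m S) (n - m)) else 0)"
proof -
  define B where "B = {M \<in> partitions_into (insert m S) n. m \<in># M}"
  have split: "partitions_into (insert m S) n = partitions_into S n \<union> B"
    and disjoint: "partitions_into S n \<inter> B = {}"
    using assms(3) by (auto simp: B_def partitions_into_def)
  have finite: "finite (partitions_into (insert m S) k)" for k
    using assms by (intro finite_partitions_into) auto
  have "card B = (if m \<le> n then card (partitions_into (insert m S) (n - m)) else 0)"
  proof (cases "m \<le> n")
    case True
    then show ?thesis
      unfolding B_def partitions_into_insert_containing[OF True] by (simp add: card_image inj_on_def)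
  next
    case False
    then have "B = {}"
      by (auto simp: B_def partitions_into_def dest: member_le_sum_mset)
    then show ?thesis
      using False by simp
  qed
  moreover have "finite B"
    using finite[of n] by (simp add: B_def)
  ultimately show ?thesis
    unfolding split using assms finite_partitions_into disjoint by (simp add: card_Un_disjoint)
qed

lemma partition_gf_insert:
  assumes "finite S" "0 \<notin> S" "m \<notin> S" "0 < m"
  shows "partition_gf (insert m S) * (1 - fps_X ^ m) = partition_gf S"
proof -
  have "partition_gf (insert m S) = partition_gf S + fps_X ^ m * partition_gf (insert m S)"
    by (rule fps_ext)
      (simp add: partition_gf_def fps_X_power_mult_nth card_partitions_into_insert[OF assms] not_less)
  then show ?thesis
    by (simp add: algebra_simps)
qed

lemma partition_gf_mult_prod:
  assumes "finite S" "0 \<notin> S"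
  shows "partition_gf S * (\<Prod>x\<in>S. 1 - fps_X ^ x) = 1"
  using assms
proof (induction S rule: finite_induct)
  case empty
  have "partitions_into {} n = (if n = 0 then {{#}} else {})" for n
    by (auto simp: partitions_into_def)
  then have "(partition_gf {} :: 'a fps) = 1"
    by (intro fps_ext) (simp add: partition_gf_def)
  then show ?case
    by simp
next
  case (insert m S)
  then have "(partition_gf (insert m S) * (\<Prod>x\<in>insert m S. 1 - fps_X ^ x) :: 'a fps)
      = (partition_gf (insert m S) * (1 - fps_X ^ m)) * (\<Prod>x\<in>S. 1 - fps_X ^ x)"
    by (simp add: mult_ac)
  also have "\<dots> = 1"
    using insert by (simp add: partition_gf_insert)
  finally show ?case .
qed

lemma partition_gf_subset:
  assumes "finite S" "0 \<notin> S" "T \<subseteq> S"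
  shows "partition_gf T = partition_gf S * (\<Prod>x\<in>S - T. 1 - fps_X ^ x)"
proof -
  have "finite T" "0 \<notin> T"
    using assms finite_subset by auto
  have "partition_gf T = (partition_gf T :: 'a fps) * (partition_gf S * (\<Prod>x\<in>S. 1 - fps_X ^ x))"
    by (simp add: partition_gf_mult_prod[OF assms(1,2)])
  also have "\<dots> = partition_gf S * (\<Prod>x\<in>S - T. 1 - fps_X ^ x)
                     * (partition_gf T * (\<Prod>x\<in>T. 1 - fps_X ^ x))"
    by (simp add: prod.subset_diff[OF assms(3,1)] mult_ac)
  also have "\<dots> = partition_gf S * (\<Prod>x\<in>S - T. 1 - fps_X ^ x)"
    by (simp add: partition_gf_mult_prod[OF \<open>finite T\<close> \<open>0 \<notin> T\<close>])
  finally show ?thesis .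
qed

lemma partitions_with_eq_partitions_into:
  "n \<le> K \<Longrightarrow> partitions_with A n = partitions_into {x. 0 < x \<and> A x \<and> x \<le> K} n"
  by (auto simp: partitions_with_def partitions_into_def dest: member_le_sum_mset)

section \<open>Partitions into parts congruent to 2 or 3 modulo 5\<close>

lemma prod_not_2_3_mod_5:
  "(\<Prod>x | 0 < x \<and> x \<le> 5 * n \<and> \<not> (x mod 5 = 2 \<or> x mod 5 = 3). 1 - fps_X ^ x)
    = (triple_product_partial 1 4 n :: 'a::comm_ring_1 fps)"
proof (induction n)
  case 0
  have empty: "{x::nat. 0 < x \<and> x \<le> 5 * 0 \<and> \<not> (x mod 5 = 2 \<or> x mod 5 = 3)} = {}"
    by auto
  show ?case
    unfolding empty by (simp add: triple_product_partial_def)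
next
  case (Suc n)
  define T where "T = {x::nat. 0 < x \<and> x \<le> 5 * n \<and> \<not> (x mod 5 = 2 \<or> x mod 5 = 3)}"
  have "{x::nat. 0 < x \<and> x \<le> 5 * Suc n \<and> \<not> (x mod 5 = 2 \<or> x mod 5 = 3)}
      = insert (5 * Suc n) (insert (5 * n + 1) (insert (5 * n + 4) T))"
    unfolding T_def by auto presburger+
  moreover have "finite T" "5 * Suc n \<notin> T" "5 * n + 1 \<notin> T" "5 * n + 4 \<notin> T"
    unfolding T_def by auto
  ultimately show ?case
    using Suc by (simp add: T_def triple_product_partial_def mult_ac)
qed

lemma P7_eq_jacobi_exp: "P7 k = int (jacobi_exp 5 1 k)"
proof -
  have "real_of_int (int k * (5 * int k - 3)) = real_of_int (2 * int (jacobi_exp 5 1 k))"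
    by (simp add: jacobi_exp_def of_nat_choose_two field_simps)
  then show ?thesis
    unfolding P7_def of_int_eq_iff by simp
qed

lemma Q7_eq_jacobi_exp: "Q7 k = int (jacobi_exp 5 4 k)"
proof -
  have "real_of_int (int k * (5 * int k + 3)) = real_of_int (2 * int (jacobi_exp 5 4 k))"
    by (simp add: jacobi_exp_def of_nat_choose_two field_simps)
  then show ?thesis
    unfolding Q7_def of_int_eq_iff by simp
qed

lemma part_eq_partition_gf_nth:
  assumes "N \<le> K"
  shows "real_of_int (part (int N - int e)) = (partition_gf {x. 0 < x \<and> x \<le> K} * fps_X ^ e) $ N"
proof (cases "e \<le> N")
  case True
  have "N - e \<le> K"
    using assms by simp
  from partitions_with_eq_partitions_into[OF this, of "\<lambda>_. True"]
  have "partitions_with (\<lambda>_. True) (N - e) = partitions_into {x. 0 < x \<and> x \<le> K} (N - e)"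
    by simp
  moreover have "nat (int N - int e) = N - e"
    using True by simp
  ultimately show ?thesis
    using True by (simp add: part_def partition_gf_def fps_X_power_mult_right_nth)
qed (simp add: part_def fps_X_power_mult_right_nth)

lemma p25_35_eq_partition_gf_nth:
  assumes "N \<le> K"
  shows "real_of_int (p25_35 (int N))
    = partition_gf {x. 0 < x \<and> (x mod 5 = 2 \<or> x mod 5 = 3) \<and> x \<le> K} $ N"
  using assms by (simp add: p25_35_def partition_gf_def partitions_with_eq_partitions_into)

lemma p25_35_eq_triple_product_nth:
  "real_of_int (p25_35 (int N))
    = (partition_gf {x. 0 < x \<and> x \<le> 5 * Suc N} * triple_product_partial 1 4 (Suc N)) $ N"
proof -
  define S where "S = {x::nat. 0 < x \<and> x \<le> 5 * Suc N}"
  define T where "T = {x::nat. 0 < x \<and> (x mod 5 = 2 \<or> x mod 5 = 3) \<and> x \<le> 5 * Suc N}"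
  have "S - T = {x. 0 < x \<and> x \<le> 5 * Suc N \<and> \<not> (x mod 5 = 2 \<or> x mod 5 = 3)}"
    by (auto simp: S_def T_def)
  moreover have "partition_gf T = (partition_gf S * (\<Prod>x\<in>S - T. 1 - fps_X ^ x) :: real fps)"
    by (rule partition_gf_subset) (auto simp: S_def T_def)
  ultimately have "partition_gf T = (partition_gf S * triple_product_partial 1 4 (Suc N) :: real fps)"
    by (simp only: prod_not_2_3_mod_5)
  then show ?thesis
    using p25_35_eq_partition_gf_nth[of N "5 * Suc N"] by (simp add: S_def T_def)
qed

lemma suminf_jacobi_exp_eq_sum:
  fixes g :: "nat \<Rightarrow> 'a::{ring_1, t2_space}"
  assumes "0 < a" "0 < b" and vanish: "\<And>e. N < e \<Longrightarrow> g e = 0"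
  shows "(\<Sum>k. (-1) ^ Suc k * (g (jacobi_exp m a (Suc k)) + g (jacobi_exp m b (Suc k))))
    = (\<Sum>k=1..Suc N. (-1) ^ k * (g (jacobi_exp m a k) + g (jacobi_exp m b k)))"
proof -
  have "(\<Sum>k. (-1) ^ Suc k * (g (jacobi_exp m a (Suc k)) + g (jacobi_exp m b (Suc k))))
      = (\<Sum>k<Suc N. (-1) ^ Suc k * (g (jacobi_exp m a (Suc k)) + g (jacobi_exp m b (Suc k))))"
  proof (rule suminf_finite)
    fix k assume "k \<notin> {..<Suc N}"
    then show "(-1) ^ Suc k * (g (jacobi_exp m a (Suc k)) + g (jacobi_exp m b (Suc k))) = 0"
      using le_jacobi_exp[OF assms(1), of "Suc k" m] le_jacobi_exp[OF assms(2), of "Suc k" m]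
      by (simp add: vanish)
  qed simp
  then show ?thesis
    by (simp only: One_nat_def sum.atLeast1_atMost_eq)
qed

theorem theorem2p2:
  fixes n :: int
  assumes "n \<ge> 0"
  shows "real_of_int (p25_35 n) = real_of_int (part n) +
    (\<Sum>k. (-1) ^ (Suc k) * real_of_int (part (n - P7 (Suc k)) + part (n - Q7 (Suc k))))"
proof -
  obtain N where n: "n = int N"
    using assms nonneg_eq_int by metis
  let ?S = "{x. 0 < x \<and> x \<le> 5 * Suc N}"
  let ?p = "\<lambda>e. real_of_int (part (int N - int e))"
  have "N \<le> 5 * Suc N"
    by simp
  note part_nth = part_eq_partition_gf_nth[OF this]
  have part_nth_0: "partition_gf ?S $ N = ?p 0"
    using part_nth[of 0] by simp
  have "real_of_int (p25_35 n) = (partition_gf ?S * triple_product_partial 1 4 (Suc N)) $ N"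
    unfolding n by (rule p25_35_eq_triple_product_nth)
  also have "\<dots> = (partition_gf ?S * (1 + (\<Sum>k=1..Suc N. (-1) ^ k
                      * (fps_X ^ jacobi_exp 5 1 k + fps_X ^ jacobi_exp 5 4 k)))) $ N"
    by (rule fps_mult_nth_cong) (simp add: triple_product_partial_nth)
  also have "\<dots> = ?p 0 + (\<Sum>k=1..Suc N. (-1) ^ k * (?p (jacobi_exp 5 1 k) + ?p (jacobi_exp 5 4 k)))"
    by (simp only: fps_mult_signed_sum_nth part_nth[symmetric] part_nth_0)
  also have "(\<Sum>k=1..Suc N. (-1) ^ k * (?p (jacobi_exp 5 1 k) + ?p (jacobi_exp 5 4 k)))
      = (\<Sum>k. (-1) ^ Suc k * (?p (jacobi_exp 5 1 (Suc k)) + ?p (jacobi_exp 5 4 (Suc k))))"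
    by (rule suminf_jacobi_exp_eq_sum[symmetric]) (simp_all add: part_def)
  finally show ?thesis
    by (simp add: n P7_eq_jacobi_exp Q7_eq_jacobi_exp)
qed

end
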